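(* Fix $\gamma>-1$. Then for every $f\in C^\infty(\mathbb D_E)$ and $(\beta,a)\in\mathbb S^1\times\mathbb R$, $$I_0^H\big(x^{2+2\gamma}\,(f\circ\Phi)\big)(\beta,a)=\mu_H(a)\,\big(I_0^E(d^\gamma f)\big)(\beta,\tan^{-1}a).$$
   Context: $\mathbb D_E=\mathbb D_H=\{|z|\le1\}$; $\Phi\colon\mathbb D_H\to\mathbb D_E$, $\Phi(z)=\frac{2z}{1+|z|^2}$; $x(z)=\frac{1-|z|^2}{1+|z|^2}$; $d(z)=1-|z|^2$; $\mu_H(a)=(1+a^2)^{-1/2}$. Hyperbolic X-ray transform: $I_0^Hh(\beta,a)=\int_{\mathbb R}h(\gamma_{\beta,a}(t))dt$ with $\gamma_{\beta,a}(t)=e^{i\beta}\frac{(2+ia)\tanh(t/2)+ia}{ia\tanh(t/2)-2+ia}$. Euclidean X-ray transform in fan-beam coordinates: $I_0^Eg(\beta,\alpha)=\int_{-\cos\alpha}^{\cos\alpha}g\big(e^{i(\beta+\alpha+\pi)}(u+i\sin\alpha)\big)du$, $(\beta,\alpha)\in\mathbb S^1\times[-\pi/2,\pi/2]$. *)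

theory Defs
  imports "HOL-Analysis.Analysis"
begin

definition dir_deriv :: "complex \<Rightarrow> (complex \<Rightarrow> 'a::real_normed_vector) \<Rightarrow> complex \<Rightarrow> 'a" where
  "dir_deriv v g z = vector_derivative (\<lambda>t::real. g (z + of_real t * v)) (at 0)"

fun Ck_on :: "nat \<Rightarrow> complex set \<Rightarrow> (complex \<Rightarrow> 'a::real_normed_vector) \<Rightarrow> bool" where
  "Ck_on 0 U g = continuous_on U g"
| "Ck_on (Suc k) U g = ((\<forall>z\<in>U. g differentiable (at z)) \<and>
      Ck_on k U (dir_deriv 1 g) \<and> Ck_on k U (dir_deriv \<i> g))"

definition smooth_on :: "complex set \<Rightarrow> (complex \<Rightarrow> 'a::real_normed_vector) \<Rightarrow> bool" where
  "smooth_on U g \<longleftrightarrow> open U \<and> (\<forall>k. Ck_on k U g)"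

definition smooth_closed_disk :: "(complex \<Rightarrow> 'a::real_normed_vector) \<Rightarrow> bool" where
  "smooth_closed_disk f \<longleftrightarrow> (\<exists>U g. open U \<and> cball 0 1 \<subseteq> U \<and> smooth_on U g \<and>
      (\<forall>z\<in>cball 0 1. g z = f z))"

definition Phi :: "complex \<Rightarrow> complex" where
  "Phi z = 2 * z / complex_of_real (1 + (cmod z)^2)"

definition xH :: "complex \<Rightarrow> real" where
  "xH z = (1 - (cmod z)^2) / (1 + (cmod z)^2)"

definition dE :: "complex \<Rightarrow> real" where
  "dE z = 1 - (cmod z)^2"

definition muH :: "real \<Rightarrow> real" where
  "muH a = 1 / sqrt (1 + a^2)"

definition geod :: "real \<Rightarrow> real \<Rightarrow> real \<Rightarrow> complex" where
  "geod \<beta> a t = exp (\<i> * of_real \<beta>) *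
     (((2 + \<i> * of_real a) * of_real (tanh (t/2)) + \<i> * of_real a) /
      (\<i> * of_real a * of_real (tanh (t/2)) - 2 + \<i> * of_real a))"

definition I0H :: "(complex \<Rightarrow> complex) \<Rightarrow> real \<Rightarrow> real \<Rightarrow> complex" where
  "I0H h \<beta> a = integral UNIV (\<lambda>t. h (geod \<beta> a t))"

definition fanE :: "real \<Rightarrow> real \<Rightarrow> real \<Rightarrow> complex" where
  "fanE \<beta> \<alpha> u = exp (\<i> * of_real (\<beta> + \<alpha> + pi)) * (of_real u + \<i> * of_real (sin \<alpha>))"

definition I0E :: "(complex \<Rightarrow> complex) \<Rightarrow> real \<Rightarrow> real \<Rightarrow> complex" where
  "I0E g \<beta> \<alpha> = integral {- cos \<alpha> .. cos \<alpha>} (\<lambda>u. g (fanE \<beta> \<alpha> u))"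

end

(*
  Phi maps the hyperbolic geodesic with parameters (beta, a) onto the Euclidean chord with
  fan-beam coordinates (beta, alpha), alpha = arctan a, and traverses it as
  u = cos alpha * tanh (t - ln (cos alpha)).  Since d o Phi = x^2 and d = cos alpha^2 - u^2 on
  the chord, the hyperbolic weight x^(2+2 gamma) along the geodesic is cos alpha times the
  Jacobian du/dt times d^gamma, so this substitution turns the hyperbolic integral into
  cos alpha = mu_H a times the Euclidean one.  Integrability of d^gamma f on the chord is a
  Beta integral, which is where gamma > -1 is needed.
*)
theory Submission
  imports Defs
begin

lemma tanh_half_real: "tanh (t / 2) = (exp t - 1) / (exp t + 1)" for t :: real
proof -
  have "exp (t / 2) ^ 2 = exp t" by (simp flip: exp_of_nat_mult)
  then show ?thesis using tanh_ln_real[of "exp (t / 2)"] by simp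
qed

lemma geod_eq_cis_divide:
  "geod \<beta> a t = cis \<beta> * (Complex (exp t - 1) (a * exp t) / Complex (- exp t - 1) (a * exp t))"
proof -
  define y \<tau> where "y = exp t" and "\<tau> = tanh (t / 2)"
  have y: "y > 0" by (simp add: y_def)
  have "y + 1 > 0" using y by simp
  then have \<tau>: "\<tau> * (y + 1) = y - 1"
    unfolding \<tau>_def tanh_half_real y_def[symmetric] by simp
  have "((2 + \<i> * a) * \<tau> + \<i> * a) * Complex (- y - 1) (a * y)
      = Complex (y - 1) (a * y) * (\<i> * a * \<tau> - 2 + \<i> * a)"
    using \<tau> by (simp add: complex_eq_iff algebra_simps)
  moreover have "\<i> * a * \<tau> - 2 + \<i> * a \<noteq> 0" "Complex (- y - 1) (a * y) \<noteq> 0"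
    using y by (simp_all add: complex_eq_iff)
  ultimately show ?thesis
    unfolding geod_def cis_conv_exp \<tau>_def[symmetric] y_def[symmetric] by (simp add: frac_eq_eq)
qed

lemma Phi_cis_mult: "Phi (cis \<beta> * z) = cis \<beta> * Phi z"
  by (simp add: Phi_def norm_mult)

lemma Phi_divide:
  assumes "q \<noteq> 0"
  shows "Phi (p / q) = 2 * p * cnj q / complex_of_real ((cmod p)^2 + (cmod q)^2)"
proof -
  have "1 + (cmod (p / q))^2 = ((cmod p)^2 + (cmod q)^2) / (cmod q)^2"
    using assms by (simp add: norm_divide power_divide field_simps)
  then have "Phi (p / q) = 2 * (p / q) * complex_of_real ((cmod q)^2)
      / complex_of_real ((cmod p)^2 + (cmod q)^2)"
    unfolding Phi_def by (simp add: field_simps)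
  also have "complex_of_real ((cmod q)^2) = q * cnj q"
    by (rule complex_norm_square)
  finally show ?thesis
    using assms by (simp add: field_simps)
qed

lemma norm_Phi: "cmod (Phi z) = 2 * cmod z / (1 + (cmod z)^2)"
proof -
  have "1 + (cmod z)^2 > 0" by (simp add: add_pos_nonneg)
  then show ?thesis
    unfolding Phi_def norm_divide norm_mult norm_of_real by simp
qed

lemma dE_Phi: "dE (Phi z) = (xH z)^2"
proof -
  define r where "r = cmod z"
  have "1 + r^2 > 0" by (simp add: add_pos_nonneg)
  then have "1 - (2 * r / (1 + r^2))^2 = ((1 - r^2) / (1 + r^2))^2"
    by (simp add: power_divide field_simps) (simp add: power2_eq_square algebra_simps)
  then show ?thesis
    unfolding dE_def xH_def norm_Phi r_def .
qed

lemma xH_pos: "cmod z < 1 \<Longrightarrow> xH z > 0"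
  unfolding xH_def by (simp add: add_pos_nonneg abs_square_less_1)

lemma fanE_eq_cis: "fanE \<beta> \<alpha> u = - cis \<beta> * cis \<alpha> * Complex u (sin \<alpha>)"
  by (simp add: fanE_def cis_conv_exp[symmetric] exp_add distrib_left complex_eq_iff)

lemma dE_fanE: "dE (fanE \<beta> \<alpha> u) = (cos \<alpha>)^2 - u^2"
  by (simp add: dE_def fanE_eq_cis norm_mult cmod_power2 cos_squared_eq)

lemma norm_geod_less_1: "cmod (geod \<beta> a t) < 1"
proof -
  have "(cmod (Complex (exp t - 1) (a * exp t)))^2 < (cmod (Complex (- exp t - 1) (a * exp t)))^2"
    unfolding cmod_power2 by (simp add: power2_eq_square algebra_simps)
  then show ?thesis
    by (simp add: geod_eq_cis_divide norm_mult norm_divide divide_less_eq_1 power2_less_imp_less)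
qed

lemma Phi_geod_eq_fanE:
  "Phi (geod \<beta> a t) = fanE \<beta> (arctan a) (cos (arctan a) * tanh (t - ln (cos (arctan a))))"
proof -
  define c s y where "c = cos (arctan a)" and "s = sin (arctan a)" and "y = exp t"
  define D where "D = 1 + (1 + a^2) * y^2"
  have c: "c > 0" and y: "y > 0" and D: "D > 0"
    by (simp_all add: c_def y_def D_def cos_arctan add_pos_nonneg)
  have sc: "s = a * c" by (simp add: s_def c_def sin_arctan cos_arctan)
  have "1 + a^2 > 0" by (simp add: add_pos_nonneg)
  then have ca: "c^2 * (1 + a^2) = 1"
    by (simp add: c_def cos_arctan power_divide)
  have T: "tanh (t - ln c) = (y^2 - c^2) / (y^2 + c^2)"
  proof -
    have "t - ln c = ln (y / c)" using c y by (simp add: ln_div y_def)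
    moreover have "((y / c)^2 - 1) / ((y / c)^2 + 1) = (y^2 - c^2) / (y^2 + c^2)"
      using c by (simp add: power_divide divide_simps)
    ultimately show ?thesis using c y by (simp add: tanh_ln_real)
  qed
  define p q where "p = Complex (y - 1) (a * y)" and "q = Complex (- y - 1) (a * y)"
  have q: "q \<noteq> 0" using y by (simp add: q_def complex_eq_iff)
  have "(cmod p)^2 + (cmod q)^2 = 2 * D"
    unfolding p_def q_def D_def cmod_power2 by (simp add: power2_eq_square algebra_simps)
  moreover have "p * cnj q = Complex (a^2 * y^2 - y^2 + 1) (- 2 * a * y^2)"
    by (simp add: p_def q_def complex_eq_iff power2_eq_square algebra_simps)
  ultimately have L: "2 * p * cnj q / complex_of_real ((cmod p)^2 + (cmod q)^2)
      = Complex ((a^2 * y^2 - y^2 + 1) / D) (- 2 * a * y^2 / D)"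
    by (simp add: complex_eq_iff mult.assoc)
  have "y^2 + c^2 > 0" using c by (simp add: add_nonneg_pos)
  then have R: "- cis (arctan a) * Complex (c * tanh (t - ln c)) s
      = Complex ((a^2 * y^2 - y^2 + 1) / D) (- 2 * a * y^2 / D)"
    unfolding T cis.ctr c_def[symmetric] s_def[symmetric] sc using D ca
    by (simp add: complex_eq_iff divide_simps D_def) algebra
  show ?thesis
    unfolding geod_eq_cis_divide Phi_cis_mult Phi_divide[OF q] fanE_eq_cis p_def[symmetric] q_def[symmetric]
      y_def[symmetric] c_def[symmetric] s_def[symmetric] L R[symmetric]
    by (simp add: mult.assoc)
qed

lemma fanE_in_cball:
  assumes "\<bar>u\<bar> \<le> cos \<alpha>"
  shows "fanE \<beta> \<alpha> u \<in> cball 0 1"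
proof -
  have "u^2 \<le> (cos \<alpha>)^2"
    using assms by (simp add: abs_le_square_iff[symmetric])
  then have "(cmod (fanE \<beta> \<alpha> u))^2 \<le> 1"
    using dE_fanE[of \<beta> \<alpha> u] unfolding dE_def by simp
  then show ?thesis by (simp add: abs_square_le_1)
qed

lemma smooth_closed_disk_imp_continuous_on:
  assumes "smooth_closed_disk f"
  shows "continuous_on (cball 0 1) f"
proof -
  obtain U g where U: "cball 0 1 \<subseteq> U" and "smooth_on U g" and gf: "\<forall>z\<in>cball 0 1. g z = f z"
    using assms unfolding smooth_closed_disk_def by blast
  then have "Ck_on 0 U g" by (simp add: smooth_on_def)
  then have "continuous_on (cball 0 1) g" using U by (simp add: continuous_on_subset)
  then show ?thesis by (rule continuous_on_eq) (use gf in auto)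
qed

lemma tanh_artanh_real:
  fixes x :: real
  assumes "x \<in> {-1<..<1}"
  shows "tanh (artanh x) = x"
proof -
  have "- 2 * artanh x = ln ((1 - x) / (1 + x))"
    using assms by (simp add: artanh_def ln_div)
  then have e: "exp (- 2 * artanh x) = (1 - x) / (1 + x)"
    using assms by simp
  have "1 + x > 0" using assms by simp
  then show ?thesis
    unfolding tanh_real_altdef e by (simp add: field_simps)
qed

lemma has_absolute_integral_tanh_substitution:
  fixes F :: "real \<Rightarrow> 'a::euclidean_space" and c s :: real
  assumes c: "c > 0" and F: "F absolutely_integrable_on {-c..c}"
  shows "(\<lambda>t. (c * (1 - tanh (t - s)^2)) *\<^sub>R F (c * tanh (t - s))) absolutely_integrable_on UNIV
    \<and> integral UNIV (\<lambda>t. (c * (1 - tanh (t - s)^2)) *\<^sub>R F (c * tanh (t - s))) = integral {-c..c} F"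
proof -
  define \<phi> where "\<phi> t = c * tanh (t - s)" for t
  have deriv: "(\<phi> has_field_derivative c * (1 - tanh (t - s)^2)) (at t)" for t
    unfolding \<phi>_def by (auto intro!: derivative_eq_intros)
  have "tanh (t - s)^2 < 1" for t
    using tanh_real_bounds[of "t - s"] by (simp add: abs_square_less_1 abs_less_iff)
  then have "\<bar>c * (1 - tanh (t - s)^2)\<bar> = c * (1 - tanh (t - s)^2)" for t
    using c by (intro abs_of_nonneg) (simp add: less_imp_le)
  moreover have "inj \<phi>"
    using c by (simp add: \<phi>_def inj_def)
  moreover have "range \<phi> = {-c<..<c}"
  proof
    show "range \<phi> \<subseteq> {-c<..<c}"
      using mult_strict_left_mono[OF tanh_real_gt_neg1 c] mult_strict_left_mono[OF tanh_real_lt_1 c]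
      by (auto simp: \<phi>_def)
    show "{-c<..<c} \<subseteq> range \<phi>"
    proof
      fix u assume "u \<in> {-c<..<c}"
      then have "u / c \<in> {-1<..<1}" using c by (simp add: field_simps)
      then have "\<phi> (artanh (u / c) + s) = u" using c by (simp add: \<phi>_def tanh_artanh_real)
      then show "u \<in> range \<phi>" by (metis rangeI)
    qed
  qed
  ultimately show ?thesis
    using has_absolute_integral_change_of_variables_real[of UNIV \<phi> "\<lambda>t. c * (1 - tanh (t - s)^2)" F]
      deriv F by (simp add: \<phi>_def absolutely_integrable_on_Icc_iff_Ioo integral_open_interval_real)
qed

lemma integrable_diff_squares_powr:
  fixes c \<gamma> :: real
  assumes c: "c > 0" and \<gamma>: "\<gamma> > -1"
  shows "(\<lambda>u. (c^2 - u^2) powr \<gamma>) integrable_on {-c..c}"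
proof -
  define B where "B t = t powr \<gamma> * (1 - t) powr \<gamma>" for t :: real
  have "B integrable_on {0..1}"
    using integrable_Beta'[of "\<gamma> + 1" "\<gamma> + 1"] \<gamma> unfolding B_def by simp
  then obtain I where "(B has_integral I) (cbox 0 1)"
    by (auto simp: integrable_on_def)
  from has_integral_affinity'[OF this, of "1 / (2 * c)" "1 / 2"] c
  have "(\<lambda>u. B (u / (2 * c) + 1 / 2)) integrable_on {-c..c}"
    by (auto simp: integrable_on_def)
  then have "(\<lambda>u. (4 * c^2) powr \<gamma> * B (u / (2 * c) + 1 / 2)) integrable_on {-c..c}"
    using c by simp
  then show ?thesis
  proof (rule integrable_eq)
    fix u
    have shift: "u / (2 * c) + 1 / 2 = (c + u) / (2 * c)" "1 - (c + u) / (2 * c) = (c - u) / (2 * c)"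
      and prod: "(c + u) / (2 * c) * ((c - u) / (2 * c)) = (c^2 - u^2) / (4 * c^2)"
      using c by (simp_all add: field_simps power2_eq_square)
    have "B (u / (2 * c) + 1 / 2) = ((c^2 - u^2) / (4 * c^2)) powr \<gamma>"
      unfolding B_def shift prod[symmetric] by (rule powr_mult[symmetric])
    also have "\<dots> = (c^2 - u^2) powr \<gamma> / (4 * c^2) powr \<gamma>"
      by (rule powr_divide)
    finally show "(4 * c^2) powr \<gamma> * B (u / (2 * c) + 1 / 2) = (c^2 - u^2) powr \<gamma>"
      using c by simp
  qed
qed

lemma absolutely_integrable_diff_squares_powr_scaleR:
  fixes c \<gamma> :: real and h :: "real \<Rightarrow> 'a::euclidean_space"
  assumes c: "c > 0" and \<gamma>: "\<gamma> > -1" and h: "continuous_on {-c..c} h"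
  shows "(\<lambda>u. (c^2 - u^2) powr \<gamma> *\<^sub>R h u) absolutely_integrable_on {-c..c}"
proof -
  have bil: "bilinear (\<lambda>x (r::real). r *\<^sub>R x)"
    unfolding bilinear_def by simp
  have meas: "h \<in> borel_measurable (lebesgue_on {-c..c})"
    using h by (simp add: continuous_imp_measurable_on_sets_lebesgue)
  have bnd: "bounded (h ` {-c..c})"
    using h by (simp add: compact_continuous_image compact_imp_bounded)
  have w: "(\<lambda>u. (c^2 - u^2) powr \<gamma>) absolutely_integrable_on {-c..c}"
    using integrable_diff_squares_powr[OF c \<gamma>] by (rule nonnegative_absolutely_integrable_1) simp
  have "{-c..c} \<in> sets lebesgue" by simp
  from absolutely_integrable_bounded_measurable_product[OF bil meas this bnd w] show ?thesis .
qed

lemma absolutely_integrable_dE_powr_on_chord: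
  fixes f :: "complex \<Rightarrow> complex"
  assumes \<gamma>: "\<gamma> > -1" and c: "cos \<alpha> > 0" and f: "continuous_on (cball 0 1) f"
  shows "(\<lambda>u. complex_of_real (dE (fanE \<beta> \<alpha> u) powr \<gamma>) * f (fanE \<beta> \<alpha> u))
    absolutely_integrable_on {-cos \<alpha>..cos \<alpha>}"
proof -
  have "fanE \<beta> \<alpha> ` {-cos \<alpha>..cos \<alpha>} \<subseteq> cball 0 1"
    using fanE_in_cball by auto
  moreover have "continuous_on {-cos \<alpha>..cos \<alpha>} (fanE \<beta> \<alpha>)"
    unfolding fanE_def by (intro continuous_intros)
  ultimately have "continuous_on {-cos \<alpha>..cos \<alpha>} (\<lambda>u. f (fanE \<beta> \<alpha> u))"
    using continuous_on_compose2[OF f] by blast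
  from absolutely_integrable_diff_squares_powr_scaleR[OF c \<gamma> this]
  show ?thesis by (simp add: dE_fanE scaleR_conv_of_real)
qed

lemma xH_powr_geod:
  fixes a \<beta> t \<gamma> :: real
  defines "c \<equiv> cos (arctan a)"
  shows "xH (geod \<beta> a t) powr (2 + 2 * \<gamma>)
    = c * (c * (1 - tanh (t - ln c)^2)) * dE (Phi (geod \<beta> a t)) powr \<gamma>"
proof -
  define x where "x = xH (geod \<beta> a t)"
  have "x > 0" unfolding x_def by (rule xH_pos[OF norm_geod_less_1])
  then have "x powr 2 = x^2" by simp
  then have "x powr (2 + 2 * \<gamma>) = x^2 * (x^2) powr \<gamma>"
    unfolding powr_add powr_powr[symmetric] by simp
  moreover have "x^2 = c * (c * (1 - tanh (t - ln c)^2))"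
    unfolding x_def dE_Phi[symmetric] Phi_geod_eq_fanE dE_fanE c_def
    by (simp add: algebra_simps power2_eq_square)
  ultimately show ?thesis unfolding x_def dE_Phi by simp
qed

theorem theorem3p13:
  fixes \<gamma> :: real and f :: "complex \<Rightarrow> complex" and \<beta> a :: real
  assumes "\<gamma> > -1" and "smooth_closed_disk f"
  shows "(\<lambda>t. complex_of_real (xH (geod \<beta> a t) powr (2 + 2*\<gamma>)) * f (Phi (geod \<beta> a t)))
            integrable_on UNIV
     \<and> (\<lambda>u. complex_of_real (dE (fanE \<beta> (arctan a) u) powr \<gamma>) * f (fanE \<beta> (arctan a) u))
            integrable_on {- cos (arctan a) .. cos (arctan a)}
     \<and> I0H (\<lambda>z. complex_of_real (xH z powr (2 + 2*\<gamma>)) * f (Phi z)) \<beta> a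
        = complex_of_real (muH a) * I0E (\<lambda>z. complex_of_real (dE z powr \<gamma>) * f z) \<beta> (arctan a)"
proof -
  define \<alpha> c where "\<alpha> = arctan a" and "c = cos \<alpha>"
  define F where "F u = complex_of_real (dE (fanE \<beta> \<alpha> u) powr \<gamma>) * f (fanE \<beta> \<alpha> u)" for u
  define G where "G t = (c * (1 - tanh (t - ln c)^2)) *\<^sub>R F (c * tanh (t - ln c))" for t
  have c: "c > 0" and mu: "muH a = c"
    by (simp_all add: c_def \<alpha>_def muH_def cos_arctan add_pos_nonneg)
  have F: "F absolutely_integrable_on {-c..c}"
    using c absolutely_integrable_dE_powr_on_chord[OF assms(1) _
        smooth_closed_disk_imp_continuous_on[OF assms(2)]]
    by (simp add: F_def[abs_def] c_def)
  have geodesic_integrand: "(\<lambda>t. complex_of_real (xH (geod \<beta> a t) powr (2 + 2*\<gamma>)) * f (Phi (geod \<beta> a t)))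
      = (\<lambda>t. c *\<^sub>R G t)"
    by (simp add: xH_powr_geod Phi_geod_eq_fanE G_def F_def \<alpha>_def[symmetric] c_def[symmetric]
        scaleR_conv_of_real mult.assoc)
  have "G integrable_on UNIV" and "integral UNIV G = integral {-c..c} F"
    using has_absolute_integral_tanh_substitution[OF c F, of "ln c"]
    by (auto simp: G_def[abs_def] intro: set_lebesgue_integral_eq_integral(1))
  then show ?thesis
    unfolding I0H_def I0E_def geodesic_integrand \<alpha>_def[symmetric] c_def[symmetric] F_def[abs_def, symmetric] mu
    using set_lebesgue_integral_eq_integral(1)[OF F]
    by (simp add: integrable_on_cmult_left scaleR_conv_of_real)
qed

end
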